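(* Let $\alpha\in\mathbb{R}$ and let $\ell$ be the power-weighted CRP loss on $(0,\infty)$ with weight $w(y)=y^\alpha$. Let $G$ be a probability distribution on $(0,\infty)$ with scale family $\{G_\sigma\}$ ($G=G_1$), and let $\sigma>1$ be such that $\ell(G,G)$, $\ell(G_\sigma,G)$ and $\ell(G_{1/\sigma},G)$ are finite. Then $\ell(G_\sigma,G)=\ell(G_{1/\sigma},G)$ if $\alpha=-1$; $\ell(G_\sigma,G)>\ell(G_{1/\sigma},G)$ if $\alpha>-1$; and $\ell(G_\sigma,G)<\ell(G_{1/\sigma},G)$ if $\alpha<-1$.
   Context: Power-weighted CRP loss with exponent $\alpha$: for a forecast CDF $F$ on $(0,\infty)$ and outcome $y>0$, $\ell(F,y)=\int_0^\infty x^\alpha(F(x)-\mathbb{I}\{y\le x\})^2dx$; expected loss $\ell(F,G)=\mathbb{E}\,\ell(F,Y)$, $Y\sim G$; induced divergence $d(F,G)=\ell(F,G)-\ell(G,G)=\int_0^\infty y^\alpha(F(y)-G(y))^2dy$. Scale family: if $Y\sim G_1$, $G_\sigma$ is the law of $\sigma Y$. *)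

theory Defs
  imports "HOL-Probability.Probability"
begin

definition pwcrp_loss :: "real \<Rightarrow> (real \<Rightarrow> real) \<Rightarrow> real \<Rightarrow> ennreal" where
  "pwcrp_loss \<alpha> F y =
     (\<integral>\<^sup>+ x \<in> {0<..}. ennreal (x powr \<alpha> * (F x - indicator {y..} x)\<^sup>2) \<partial>lborel)"

definition pwcrp_exp :: "real \<Rightarrow> (real \<Rightarrow> real) \<Rightarrow> real measure \<Rightarrow> ennreal" where
  "pwcrp_exp \<alpha> F M = (\<integral>\<^sup>+ y. pwcrp_loss \<alpha> F y \<partial>M)"

definition scale_law :: "real \<Rightarrow> real measure \<Rightarrow> real measure" where
  "scale_law \<sigma> M = distr M borel (\<lambda>y. \<sigma> * y)"

end

theory Submission
  imports Defs
begin

text \<open>The expected loss splits as \<open>\<ell>(F,G) = d(F,G) + \<ell>(G,G)\<close> (Fubini and the pointwise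
  bias-variance identity \<open>E (c - 1{Y \<le> x})\<^sup>2 = (c - G x)\<^sup>2 + G x (1 - G x)\<close>).  Substituting
  \<open>x = \<sigma> u\<close> gives \<open>d(G_\<sigma>, G) = \<sigma> powr (\<alpha> + 1) * d(G_(1/\<sigma>), G)\<close>, so the comparison is decided
  by the sign of \<open>\<alpha> + 1\<close>, provided \<open>d(G_(1/\<sigma>), G)\<close> is finite and nonzero.  It is nonzero
  because \<open>G (\<sigma> x) = G x\<close> for all \<open>x > 0\<close> would force \<open>G x = G (x / \<sigma>^n) \<rightarrow> G 0 = 0\<close>, and
  right continuity turns a single point with \<open>G (\<sigma> x) \<noteq> G x\<close> into an interval of positive
  length.\<close>

definition pwcrp_div :: "real \<Rightarrow> (real \<Rightarrow> real) \<Rightarrow> (real \<Rightarrow> real) \<Rightarrow> ennreal" where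
  "pwcrp_div \<alpha> F G = (\<integral>\<^sup>+ x \<in> {0<..}. ennreal (x powr \<alpha> * (F x - G x)\<^sup>2) \<partial>lborel)"

lemma pwcrp_div_self [simp]: "pwcrp_div \<alpha> F F = 0"
  by (simp add: pwcrp_div_def)

lemma (in real_distribution) borel_measurable_cdf [measurable]: "cdf M \<in> borel_measurable borel"
  by (auto intro!: borel_measurable_mono simp: mono_def cdf_nondecreasing)

lemma (in real_distribution) cdf_scale_law:
  assumes "s > 0"
  shows "cdf (scale_law s M) x = cdf M (x / s)"
proof -
  have "(\<lambda>y. s * y) -` {..x} \<inter> space M = {..x / s}"
    using assms by (auto simp: field_simps)
  then show ?thesis
    unfolding cdf_def scale_law_def by (subst measure_distr) auto
qed

lemma (in real_distribution) nn_integral_sq_diff_indicator: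
  assumes "w \<ge> 0"
  shows "(\<integral>\<^sup>+ y. ennreal (w * (c - indicator {y..} x)\<^sup>2) \<partial>M)
       = ennreal (w * ((c - cdf M x)\<^sup>2 + cdf M x * (1 - cdf M x)))"
proof -
  have split: "ennreal (w * (c - indicator {y..} x)\<^sup>2)
     = ennreal (w * (c - 1)\<^sup>2) * indicator {..x} y + ennreal (w * c\<^sup>2) * indicator {x<..} y" for y
    by (auto simp: indicator_def)
  have "{x<..} = space M - {..x}" by auto
  then have "measure M {x<..} = 1 - cdf M x"
    unfolding cdf_def by (simp only:) (subst prob_compl, auto)
  then have upper: "emeasure M {x<..} = ennreal (1 - cdf M x)"
    by (simp add: emeasure_eq_measure)
  have lower: "emeasure M {..x} = ennreal (cdf M x)"
    by (simp add: emeasure_eq_measure cdf_def)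
  have "(\<integral>\<^sup>+ y. ennreal (w * (c - indicator {y..} x)\<^sup>2) \<partial>M)
     = ennreal (w * (c - 1)\<^sup>2) * emeasure M {..x} + ennreal (w * c\<^sup>2) * emeasure M {x<..}"
    unfolding split by (subst nn_integral_add) (auto simp: nn_integral_cmult_indicator)
  also have "\<dots> = ennreal (w * (c - 1)\<^sup>2 * cdf M x + w * c\<^sup>2 * (1 - cdf M x))"
    unfolding upper lower using assms cdf_bounded_prob[of x] cdf_nonneg[of x]
    by (simp add: ennreal_mult[symmetric] ennreal_plus[symmetric] del: ennreal_plus)
  also have "\<dots> = ennreal (w * ((c - cdf M x)\<^sup>2 + cdf M x * (1 - cdf M x)))"
    by (simp add: algebra_simps power2_eq_square)
  finally show ?thesis .
qed

lemma (in real_distribution) pwcrp_exp_eq_entropy_integral: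
  assumes [measurable]: "F \<in> borel_measurable borel"
  shows "pwcrp_exp \<alpha> F M = pwcrp_div \<alpha> F (cdf M)
     + (\<integral>\<^sup>+ x \<in> {0<..}. ennreal (x powr \<alpha> * (cdf M x * (1 - cdf M x))) \<partial>lborel)"
proof -
  interpret pair_sigma_finite lborel M by unfold_locales
  let ?f = "\<lambda>x y. ennreal (x powr \<alpha> * (F x - indicator {y..} x)\<^sup>2) * indicator {0<..} x"
  have "(\<lambda>(x, y). ennreal (x powr \<alpha> * (F x - (if y \<le> x then 1 else 0))\<^sup>2) * indicator {0<..} x)
     \<in> borel_measurable (lborel \<Otimes>\<^sub>M M)"
    by measurable
  then have meas: "case_prod ?f \<in> borel_measurable (lborel \<Otimes>\<^sub>M M)"
    by (simp add: indicator_def[of "{_..}"] of_bool_def)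
  have inner: "(\<integral>\<^sup>+ y. ?f x y \<partial>M) = ennreal (x powr \<alpha> * (F x - cdf M x)\<^sup>2) * indicator {0<..} x
     + ennreal (x powr \<alpha> * (cdf M x * (1 - cdf M x))) * indicator {0<..} x" for x
    using nn_integral_sq_diff_indicator[of "x powr \<alpha>" "F x" x]
      cdf_bounded_prob[of x] cdf_nonneg[of x]
    by (cases "x > 0") (simp_all add: ennreal_plus[symmetric] distrib_left del: ennreal_plus)
  have "pwcrp_exp \<alpha> F M = (\<integral>\<^sup>+ y. (\<integral>\<^sup>+ x. ?f x y \<partial>lborel) \<partial>M)"
    unfolding pwcrp_exp_def pwcrp_loss_def ..
  also have "\<dots> = (\<integral>\<^sup>+ x. (\<integral>\<^sup>+ y. ?f x y \<partial>M) \<partial>lborel)"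
    using Fubini'[OF meas] .
  also have "\<dots> = pwcrp_div \<alpha> F (cdf M)
     + (\<integral>\<^sup>+ x \<in> {0<..}. ennreal (x powr \<alpha> * (cdf M x * (1 - cdf M x))) \<partial>lborel)"
    unfolding inner pwcrp_div_def by (rule nn_integral_add) measurable
  finally show ?thesis .
qed

lemma (in real_distribution) pwcrp_exp_eq_div_plus_self:
  assumes "F \<in> borel_measurable borel"
  shows "pwcrp_exp \<alpha> F M = pwcrp_div \<alpha> F (cdf M) + pwcrp_exp \<alpha> (cdf M) M"
  using pwcrp_exp_eq_entropy_integral[OF assms] pwcrp_exp_eq_entropy_integral[of "cdf M"]
  by simp

lemma pwcrp_div_dilation:
  assumes [measurable]: "G \<in> borel_measurable borel" and s: "s > 0"
  shows "pwcrp_div \<alpha> (\<lambda>x. G (x / s)) G = ennreal (s powr (\<alpha> + 1)) * pwcrp_div \<alpha> (\<lambda>x. G (s * x)) G"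
proof -
  have subst: "ennreal ((0 + s * x) powr \<alpha> * (G ((0 + s * x) / s) - G (0 + s * x))\<^sup>2)
       * indicator {0<..} (0 + s * x)
     = ennreal (s powr \<alpha>) * (ennreal (x powr \<alpha> * (G (s * x) - G x)\<^sup>2) * indicator {0<..} x)" for x
    using s
    by (cases "x > 0")
      (simp_all add: powr_mult ennreal_mult' power2_commute[of "G x"] mult.assoc
        indicator_def zero_less_mult_iff)
  have "pwcrp_div \<alpha> (\<lambda>x. G (x / s)) G
     = ennreal \<bar>s\<bar> * (\<integral>\<^sup>+ x. ennreal ((0 + s * x) powr \<alpha> * (G ((0 + s * x) / s) - G (0 + s * x))\<^sup>2)
         * indicator {0<..} (0 + s * x) \<partial>lborel)"
    unfolding pwcrp_div_def by (rule nn_integral_real_affine) (use s in auto)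
  also have "\<dots> = ennreal s * ennreal (s powr \<alpha>) * pwcrp_div \<alpha> (\<lambda>x. G (s * x)) G"
    unfolding subst pwcrp_div_def using s by (subst nn_integral_cmult) (auto simp: mult.assoc)
  also have "ennreal s * ennreal (s powr \<alpha>) = ennreal (s powr (\<alpha> + 1))"
    using s by (simp add: ennreal_mult[symmetric] powr_add)
  finally show ?thesis .
qed

lemma pwcrp_div_nonzero:
  assumes [measurable]: "F \<in> borel_measurable borel" "G \<in> borel_measurable borel"
    and x0: "x0 > 0" "F x0 \<noteq> G x0"
    and "(F \<longlongrightarrow> F x0) (at_right x0)" "(G \<longlongrightarrow> G x0) (at_right x0)"
  shows "pwcrp_div \<alpha> F G \<noteq> 0"
proof
  define \<delta> where "\<delta> = \<bar>F x0 - G x0\<bar>"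
  have "\<delta> > 0" using x0 by (simp add: \<delta>_def)
  have "((\<lambda>x. \<bar>F x - G x\<bar>) \<longlongrightarrow> \<delta>) (at_right x0)"
    unfolding \<delta>_def using assms by (intro tendsto_intros)
  then have "eventually (\<lambda>x. \<bar>F x - G x\<bar> > \<delta> / 2) (at_right x0)"
    by (rule order_tendstoD) (use \<open>\<delta> > 0\<close> in simp)
  then obtain b where b: "b > x0" "\<And>x. x0 < x \<Longrightarrow> x < b \<Longrightarrow> \<bar>F x - G x\<bar> > \<delta> / 2"
    using eventually_at_right[of x0 "x0 + 1"] by auto
  assume "pwcrp_div \<alpha> F G = 0"
  then have "AE x in lborel. ennreal (x powr \<alpha> * (F x - G x)\<^sup>2) * indicator {0<..} x = 0"
    unfolding pwcrp_div_def by (subst (asm) nn_integral_0_iff_AE) auto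
  then have "AE x in lborel. x \<notin> {x0<..<b}"
  proof (rule eventually_mono)
    fix x assume "ennreal (x powr \<alpha> * (F x - G x)\<^sup>2) * indicator {0<..} x = 0"
    moreover have "x powr \<alpha> * (F x - G x)\<^sup>2 > 0" if "x \<in> {x0<..<b}"
      using that x0 b(2)[of x] \<open>\<delta> > 0\<close> by (auto simp: abs_if split: if_splits)
    ultimately show "x \<notin> {x0<..<b}"
      using x0 by (auto simp: indicator_def)
  qed
  then have "emeasure lborel {x0<..<b} = 0"
    by (subst (asm) AE_iff_measurable[of "{x0<..<b}"]) auto
  with b show False by simp
qed

lemma (in real_distribution) cdf_not_dilation_invariant:
  assumes pos: "AE y in M. 0 < y" and s: "s > 1"
  obtains x where "x > 0" "cdf M (s * x) \<noteq> cdf M x"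
proof (rule ccontr)
  assume "\<not> thesis"
  with that have invariant: "cdf M (s * x) = cdf M x" if "x > 0" for x
    using that by blast
  have "emeasure M {..0} = 0"
    using pos by (subst (asm) AE_iff_measurable[of "{..0}"]) auto
  then have cdf_0: "cdf M 0 = 0"
    by (simp add: cdf_def measure_def)
  have "eventually (\<lambda>x. cdf M x > 1/2) at_top"
    using cdf_lim_at_top_prob by (rule order_tendstoD) simp
  then have "eventually (\<lambda>x. x > 0 \<and> cdf M x > 1/2) at_top"
    using eventually_gt_at_top[of 0] by eventually_elim auto
  then obtain x1 where x1: "x1 > 0" "cdf M x1 > 1/2"
    using eventually_happens'[OF trivial_limit_at_top_linorder] by blast
  have shrink: "cdf M (x1 / s ^ n) = cdf M x1" for n
  proof (induction n)
    case (Suc n)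
    have "cdf M (x1 / s ^ Suc n) = cdf M (s * (x1 / s ^ Suc n))"
      using x1 s by (intro invariant[symmetric]) auto
    also have "s * (x1 / s ^ Suc n) = x1 / s ^ n" using s by simp
    finally show ?case using Suc by simp
  qed simp
  have "filterlim (\<lambda>n. x1 / s ^ n) (at_right 0) sequentially"
    unfolding filterlim_at using LIMSEQ_divide_realpow_zero[OF s] x1 s by auto
  from filterlim_compose[OF cdf_is_right_cont[unfolded continuous_within, of 0] this]
  have "(\<lambda>n. cdf M x1) \<longlonglongrightarrow> 0"
    unfolding shrink cdf_0 .
  with x1 show False by (simp add: LIMSEQ_const_iff)
qed

lemma (in real_distribution) pwcrp_div_dilation_nonzero:
  assumes "AE y in M. 0 < y" and s: "s > 1"
  shows "pwcrp_div \<alpha> (\<lambda>x. cdf M (s * x)) (cdf M) \<noteq> 0"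
proof -
  obtain x0 where x0: "x0 > 0" "cdf M (s * x0) \<noteq> cdf M x0"
    using cdf_not_dilation_invariant[OF assms] .
  have "filterlim (\<lambda>x. s * x) (at_right (s * x0)) (at_right x0)"
    unfolding filterlim_at
  proof
    show "\<forall>\<^sub>F x in at_right x0. s * x \<in> {s * x0<..} \<and> s * x \<noteq> s * x0"
      using eventually_at_right_less[of x0] by eventually_elim (use s in auto)
  qed (intro tendsto_intros)
  from filterlim_compose[OF cdf_is_right_cont[unfolded continuous_within, of "s * x0"] this]
  show ?thesis
    using x0 cdf_is_right_cont[unfolded continuous_within, of x0]
    by (intro pwcrp_div_nonzero) auto
qed

lemma ennreal_mult_add_less_mult_add_iff:
  assumes "D \<noteq> 0" "D \<noteq> \<infinity>" "C \<noteq> \<infinity>" "k \<ge> 0" "k' \<ge> 0"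
  shows "ennreal k * D + C < ennreal k' * D + C \<longleftrightarrow> k < k'"
proof -
  obtain d c where "D = ennreal d" "d > 0" "C = ennreal c" "c \<ge> 0"
    using assms by (cases D; cases C) (auto simp: less_le)
  with assms show ?thesis
    by (simp add: ennreal_mult[symmetric] ennreal_plus[symmetric] ennreal_less_iff
        del: ennreal_plus)
qed

theorem mainTheorem14:
  fixes \<alpha> \<sigma> :: real and M :: "real measure"
  assumes "prob_space M" and "sets M = sets borel"
    and "AE y in M. 0 < y"
    and "\<sigma> > 1"
    and "pwcrp_exp \<alpha> (cdf M) M \<noteq> \<infinity>"
    and "pwcrp_exp \<alpha> (cdf (scale_law \<sigma> M)) M \<noteq> \<infinity>"
    and "pwcrp_exp \<alpha> (cdf (scale_law (1 / \<sigma>) M)) M \<noteq> \<infinity>"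
  shows "(\<alpha> = -1 \<longrightarrow> pwcrp_exp \<alpha> (cdf (scale_law \<sigma> M)) M = pwcrp_exp \<alpha> (cdf (scale_law (1 / \<sigma>) M)) M)
       \<and> (\<alpha> > -1 \<longrightarrow> pwcrp_exp \<alpha> (cdf (scale_law \<sigma> M)) M > pwcrp_exp \<alpha> (cdf (scale_law (1 / \<sigma>) M)) M)
       \<and> (\<alpha> < -1 \<longrightarrow> pwcrp_exp \<alpha> (cdf (scale_law \<sigma> M)) M < pwcrp_exp \<alpha> (cdf (scale_law (1 / \<sigma>) M)) M)"
proof -
  interpret real_distribution M
    using assms(1,2) by (simp add: real_distribution_def real_distribution_axioms_def)
  have "\<sigma> > 0" using assms(4) by simp
  define C where "C = pwcrp_exp \<alpha> (cdf M) M"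
  define D where "D = pwcrp_div \<alpha> (\<lambda>x. cdf M (\<sigma> * x)) (cdf M)"
  have loss_up: "pwcrp_exp \<alpha> (cdf (scale_law \<sigma> M)) M = ennreal (\<sigma> powr (\<alpha> + 1)) * D + C"
    using ext[of "cdf (scale_law \<sigma> M)", OF cdf_scale_law[OF \<open>\<sigma> > 0\<close>]]
      pwcrp_div_dilation[OF borel_measurable_cdf \<open>\<sigma> > 0\<close>] pwcrp_exp_eq_div_plus_self[of "\<lambda>x. cdf M (x / \<sigma>)"]
    by (simp add: C_def D_def)
  have loss_down: "pwcrp_exp \<alpha> (cdf (scale_law (1 / \<sigma>) M)) M = ennreal 1 * D + C"
    using ext[of "cdf (scale_law (1 / \<sigma>) M)", OF cdf_scale_law[of "1 / \<sigma>"]] \<open>\<sigma> > 0\<close>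
      pwcrp_exp_eq_div_plus_self[of "\<lambda>x. cdf M (\<sigma> * x)"]
    by (simp add: C_def D_def mult.commute)
  have D_C: "D \<noteq> 0" "D \<noteq> \<infinity>" "C \<noteq> \<infinity>"
    using pwcrp_div_dilation_nonzero[OF assms(3,4)] assms(5,7) loss_down
    by (simp_all add: C_def D_def)
  note compare = ennreal_mult_add_less_mult_add_iff[OF D_C, THEN iffD2]
  show ?thesis
    unfolding loss_up loss_down
  proof (intro conjI impI)
    assume "\<alpha> = -1"
    then show "ennreal (\<sigma> powr (\<alpha> + 1)) * D + C = ennreal 1 * D + C"
      using \<open>\<sigma> > 0\<close> by simp
  next
    assume "\<alpha> > -1"
    then show "ennreal (\<sigma> powr (\<alpha> + 1)) * D + C > ennreal 1 * D + C"
      using gr_one_powr[OF assms(4), of "\<alpha> + 1"] by (intro compare) auto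
  next
    assume "\<alpha> < -1"
    then show "ennreal (\<sigma> powr (\<alpha> + 1)) * D + C < ennreal 1 * D + C"
      using powr_less_one[OF assms(4), of "\<alpha> + 1"] by (intro compare) auto
  qed
qed

end
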